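(* In the construction described in the context, there exists $\ell=O(\log n)$ with the following property. If $p\ell<1$ and $p\delta\ge 32c$, then with high probability the connected components of $G_\ell$ are $c$-edge-connected and equal to the connected components of $H_\ell$.
   Context: **Setting.** Let $G=(V,E)$ be an undirected graph (parallel edges allowed, no self-loops) with $n$ vertices and $m$ edges $E=\{e_1,\dots,e_m\}$. Fix integers $c\ge1$, $\delta>c$, $\ell\ge1$ and a real $p\in(0,1)$, and let $s=\lceil pm\rceil$. For graphs on $V$, $\cup$ and $\cap$ act on edge sets. For $C\subseteq V$, $\partial_F(C)$ is the set of edges of $F$ with exactly one endpoint in $C$. A graph is $c$-edge-connected if it has no cut of size $<c$, and $c$-edge-connected components are maximal induced $c$-edge-connected subgraphs. **Sampling.** For $i=1,\dots,\ell$, $r_i:\{1,\dots,s\}\to\{1,\dots,m\}$ is a pairwise independent random function (values uniform, pairwise independent), and $r_1,\dots,r_\ell$ are mutually independent. Set $H_0^0=(V,\emptyset)$ and $H_i^0=H_{i-1}^0\cup(V,\{e_{r_i(1)},\dots,e_{r_i(s)}\})$. **Levels.** Set $G_{-1}=G$. For $i=0,\dots,\ell$: - $H_i$ is the subgraph of $H_i^0\cap G_{i-1}$ consisting of the edges inside its $c$-edge-connected components. - Starting from $G_i:=G_{i-1}$, while some connected component $C$ of $H_i$ satisfies $0<|\partial_{G_i}(C)|<\delta$, delete $\partial_{G_i}(C)$ from $G_i$ and $H_i$. "With high probability" means with probability $1-O(n^{-\gamma})$ for any chosen constant $\gamma$; the constant hidden in $\ell=O(\log n)$ may depend on $\gamma$.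 *)

theory Defs
  imports "HOL-Probability.Probability"
begin

text \<open>A multigraph on vertex set V (vertices are naturals) with edges indexed 1..m;
  ep e = (u, v) gives the two endpoints of edge e. Subgraphs on V are sets of edge indices.\<close>

definition boundary :: "(nat \<Rightarrow> nat \<times> nat) \<Rightarrow> nat set \<Rightarrow> nat set \<Rightarrow> nat set" where
  "boundary ep F C = {e \<in> F. (fst (ep e) \<in> C) \<noteq> (snd (ep e) \<in> C)}"

definition induced :: "(nat \<Rightarrow> nat \<times> nat) \<Rightarrow> nat set \<Rightarrow> nat set \<Rightarrow> nat set" where
  "induced ep F W = {e \<in> F. fst (ep e) \<in> W \<and> snd (ep e) \<in> W}"

definition edge_connected :: "(nat \<Rightarrow> nat \<times> nat) \<Rightarrow> nat \<Rightarrow> nat set \<Rightarrow> nat set \<Rightarrow> bool" where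
  "edge_connected ep c W F \<longleftrightarrow>
     (\<forall>C. C \<subseteq> W \<longrightarrow> C \<noteq> {} \<longrightarrow> C \<noteq> W \<longrightarrow> c \<le> card (boundary ep F C))"

definition ecc_components :: "(nat \<Rightarrow> nat \<times> nat) \<Rightarrow> nat \<Rightarrow> nat set \<Rightarrow> nat set \<Rightarrow> nat set set" where
  "ecc_components ep c V F =
     {W. W \<subseteq> V \<and> W \<noteq> {} \<and> edge_connected ep c W (induced ep F W) \<and>
         (\<forall>W'. W \<subseteq> W' \<and> W' \<subseteq> V \<and> edge_connected ep c W' (induced ep F W') \<longrightarrow> W' = W)}"

definition adj :: "(nat \<Rightarrow> nat \<times> nat) \<Rightarrow> nat set \<Rightarrow> nat \<Rightarrow> nat \<Rightarrow> bool" where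
  "adj ep F u v \<longleftrightarrow> (\<exists>e\<in>F. ep e = (u, v) \<or> ep e = (v, u))"

definition components :: "(nat \<Rightarrow> nat \<times> nat) \<Rightarrow> nat set \<Rightarrow> nat set \<Rightarrow> nat set set" where
  "components ep V F = (\<lambda>v. {u \<in> V. (adj ep F)\<^sup>*\<^sup>* v u}) ` V"

definition core_edges :: "(nat \<Rightarrow> nat \<times> nat) \<Rightarrow> nat \<Rightarrow> nat set \<Rightarrow> nat set \<Rightarrow> nat set" where
  "core_edges ep c V F =
     {e \<in> F. \<exists>W \<in> ecc_components ep c V F. fst (ep e) \<in> W \<and> snd (ep e) \<in> W}"

inductive peel_step :: "(nat \<Rightarrow> nat \<times> nat) \<Rightarrow> nat set \<Rightarrow> nat \<Rightarrow> nat set \<times> nat set \<Rightarrow> nat set \<times> nat set \<Rightarrow> bool"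
  for ep V \<delta> where
  "C \<in> components ep V H \<Longrightarrow> 0 < card (boundary ep G C) \<Longrightarrow> card (boundary ep G C) < \<delta> \<Longrightarrow>
   peel_step ep V \<delta> (G, H) (G - boundary ep G C, H - boundary ep G C)"

definition sampled :: "(nat \<Rightarrow> nat \<Rightarrow> nat) \<Rightarrow> nat \<Rightarrow> nat \<Rightarrow> nat set" where
  "sampled r s i = (\<Union>k\<in>{1..i}. r k ` {1..s})"

text \<open>Gs i, Hs i (i = 0..l) are the final G_i, H_i of some run of the construction
  with samples r (r i j = r_i(j)); G_{-1} = G = all edges {1..m}.\<close>
definition level_run :: "(nat \<Rightarrow> nat \<times> nat) \<Rightarrow> nat set \<Rightarrow> nat \<Rightarrow> nat \<Rightarrow> nat \<Rightarrow> nat \<Rightarrow> nat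
    \<Rightarrow> (nat \<Rightarrow> nat \<Rightarrow> nat) \<Rightarrow> (nat \<Rightarrow> nat set) \<Rightarrow> (nat \<Rightarrow> nat set) \<Rightarrow> bool" where
  "level_run ep V m c \<delta> s l r Gs Hs \<longleftrightarrow>
     (\<forall>i\<le>l. let Gp = (if i = 0 then {1..m} else Gs (i - 1));
                Hi = core_edges ep c V (sampled r s i \<inter> Gp)
            in (peel_step ep V \<delta>)\<^sup>*\<^sup>* (Gp, Hi) (Gs i, Hs i) \<and>
               \<not> (\<exists>x. peel_step ep V \<delta> (Gs i, Hs i) x))"

definition pairwise_indep_uniform :: "(nat \<Rightarrow> nat) pmf \<Rightarrow> nat \<Rightarrow> nat \<Rightarrow> bool" where
  "pairwise_indep_uniform D s m \<longleftrightarrow>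
     (\<forall>j\<in>{1..s}. \<forall>a\<in>{1..m}. measure_pmf.prob D {f. f j = a} = 1 / real m) \<and>
     (\<forall>j\<in>{1..s}. \<forall>k\<in>{1..s}. j \<noteq> k \<longrightarrow> (\<forall>a\<in>{1..m}. \<forall>b\<in>{1..m}.
        measure_pmf.prob D {f. f j = a \<and> f k = b} = 1 / (real m)^2))"

end

theory Submission
  imports Defs
begin

text \<open>Call a part of level i a c-edge-connected component of the sampled edges
  H_i^0 \<inter> G_{i-1}, and call it active if G_i still has edges leaving it; since boundaries
  smaller than \<delta> are peeled off, an active part has at least \<delta> of them. Parts only grow
  from one level to the next. The parts of the next level are c-edge-connected while no union
  of two of them is, so at most c (k - 1) sampled edges run between k of them. Hence an
  active part that receives 4c sampled boundary edges must merge with others, and counting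
  gives 3 |A_{i+1}| \<le> 2 |A_i| + 2 |poor parts of A_i|, where a part is poor if it receives
  fewer than 4c. For pairwise independent samples a second moment bound makes each active
  part poor with probability at most 1/6, so the expected number of active parts drops by the
  factor 7/9 per round. After O(log n) rounds no part is active with high probability; then
  the parts are the connected components of both G_l and H_l, and they are c-edge-connected
  in G_l.\<close>

section \<open>Edge-connected vertex sets\<close>

lemma boundary_mono: "F \<subseteq> F' \<Longrightarrow> boundary ep F C \<subseteq> boundary ep F' C"
  unfolding boundary_def by auto

lemma finite_boundary: "finite F \<Longrightarrow> finite (boundary ep F C)"
  unfolding boundary_def by simp

lemma finite_induced: "finite F \<Longrightarrow> finite (induced ep F W)"
  unfolding induced_def by simp

lemma edge_connectedD:
  "edge_connected ep c W F \<Longrightarrow> C \<subseteq> W \<Longrightarrow> C \<noteq> {} \<Longrightarrow> C \<noteq> W \<Longrightarrow> c \<le> card (boundary ep F C)"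
  unfolding edge_connected_def by blast

lemma edge_connected_mono:
  assumes "edge_connected ep c W F" "F \<subseteq> F'" "finite F'"
  shows "edge_connected ep c W F'"
  unfolding edge_connected_def
proof (intro allI impI)
  fix C assume "C \<subseteq> W" "C \<noteq> {}" "C \<noteq> W"
  then have "c \<le> card (boundary ep F C)" using assms(1) unfolding edge_connected_def by auto
  also have "\<dots> \<le> card (boundary ep F' C)"
    by (intro card_mono finite_boundary boundary_mono assms(2,3))
  finally show "c \<le> card (boundary ep F' C)" .
qed

lemma edge_connected_singleton: "edge_connected ep c {v} F"
  unfolding edge_connected_def by (auto simp: subset_singleton_iff)

lemma edge_connected_Un:
  assumes "finite F" "W1 \<inter> W2 \<noteq> {}"
    and "edge_connected ep c W1 (induced ep F W1)"
    and "edge_connected ep c W2 (induced ep F W2)"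
  shows "edge_connected ep c (W1 \<union> W2) (induced ep F (W1 \<union> W2))"
  unfolding edge_connected_def
proof (intro allI impI)
  fix C assume C: "C \<subseteq> W1 \<union> W2" "C \<noteq> {}" "C \<noteq> W1 \<union> W2"
  \<comment> \<open>Since the two sets overlap, one of them is split by C, and its cut lies in the cut of C.\<close>
  have "\<not> (C \<inter> W1 = {} \<or> W1 \<subseteq> C) \<or> \<not> (C \<inter> W2 = {} \<or> W2 \<subseteq> C)"
    using C assms(2) by blast
  then obtain W where W: "W = W1 \<or> W = W2" "C \<inter> W \<noteq> {}" "C \<inter> W \<noteq> W"
    by blast
  have ecW: "edge_connected ep c W (induced ep F W)" using W(1) assms(3,4) by blast
  have "c \<le> card (boundary ep (induced ep F W) (C \<inter> W))"
    by (rule edge_connectedD[OF ecW]) (use W(2,3) in auto)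
  also have "\<dots> \<le> card (boundary ep (induced ep F (W1 \<union> W2)) C)"
    using W(1) assms(1)
    by (intro card_mono finite_boundary finite_induced) (auto simp: boundary_def induced_def)
  finally show "c \<le> card (boundary ep (induced ep F (W1 \<union> W2)) C)" .
qed

lemma edge_connected_Union:
  assumes "finite F" "finite \<W>" "\<W> \<noteq> {}"
    and "\<And>W. W \<in> \<W> \<Longrightarrow> v \<in> W \<and> edge_connected ep c W (induced ep F W)"
  shows "edge_connected ep c (\<Union>\<W>) (induced ep F (\<Union>\<W>))"
  using assms(2-)
proof (induction \<W> rule: finite_ne_induct)
  case (insert W \<W>)
  then have "W \<inter> \<Union>\<W> \<noteq> {}" by blast
  with insert show ?case using edge_connected_Un[OF assms(1), of W "\<Union>\<W>"] by simp
qed simp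

lemma edge_connected_subset_or_disjoint:
  assumes "finite F" "W \<subseteq> U" "edge_connected ep c W (induced ep F W)"
    and "card (boundary ep (induced ep F U) C) < c"
  shows "W \<subseteq> C \<or> W \<inter> C = {}"
proof (rule ccontr)
  assume "\<not> (W \<subseteq> C \<or> W \<inter> C = {})"
  then have "c \<le> card (boundary ep (induced ep F W) (C \<inter> W))"
    by (intro edge_connectedD[OF assms(3)]) auto
  also have "\<dots> \<le> card (boundary ep (induced ep F U) C)"
    using assms(1,2)
    by (intro card_mono finite_boundary finite_induced) (auto simp: boundary_def induced_def)
  finally show False using assms(4) by simp
qed

definition crossing_edges :: "(nat \<Rightarrow> nat \<times> nat) \<Rightarrow> nat set \<Rightarrow> nat set set \<Rightarrow> nat set" where
  "crossing_edges ep F \<W> =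
     {e \<in> F. \<exists>W1\<in>\<W>. \<exists>W2\<in>\<W>. W1 \<noteq> W2 \<and> fst (ep e) \<in> W1 \<and> snd (ep e) \<in> W2}"

lemma crossing_edges_split:
  assumes "\<W> = \<W>1 \<union> \<W>2" "\<forall>W\<in>\<W>1. W \<subseteq> C" "\<forall>W\<in>\<W>2. W \<inter> C = {}"
  shows "crossing_edges ep F \<W> \<subseteq>
    crossing_edges ep F \<W>1 \<union> crossing_edges ep F \<W>2 \<union> boundary ep (induced ep F (\<Union>\<W>)) C"
proof
  fix e assume "e \<in> crossing_edges ep F \<W>"
  then obtain W1 W2 where e: "e \<in> F" "W1 \<in> \<W>" "W2 \<in> \<W>" "W1 \<noteq> W2"
    "fst (ep e) \<in> W1" "snd (ep e) \<in> W2"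
    unfolding crossing_edges_def by blast
  have ends: "fst (ep e) \<in> \<Union>\<W>" "snd (ep e) \<in> \<Union>\<W>" using e by blast+
  consider "W1 \<in> \<W>1" "W2 \<in> \<W>1" | "W1 \<in> \<W>2" "W2 \<in> \<W>2"
    | "W1 \<in> \<W>1" "W2 \<in> \<W>2" | "W1 \<in> \<W>2" "W2 \<in> \<W>1"
    using e(2,3) assms(1) by blast
  then show "e \<in> crossing_edges ep F \<W>1 \<union> crossing_edges ep F \<W>2
      \<union> boundary ep (induced ep F (\<Union>\<W>)) C"
  proof cases
    case 1
    then have "e \<in> crossing_edges ep F \<W>1" unfolding crossing_edges_def using e by blast
    then show ?thesis by blast
  next
    case 2
    then have "e \<in> crossing_edges ep F \<W>2" unfolding crossing_edges_def using e by blast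
    then show ?thesis by blast
  next
    case 3
    then have "fst (ep e) \<in> C" "snd (ep e) \<notin> C" using e(5,6) assms(2,3) by blast+
    then show ?thesis using e(1) ends unfolding boundary_def induced_def by blast
  next
    case 4
    then have "fst (ep e) \<notin> C" "snd (ep e) \<in> C" using e(5,6) assms(2,3) by blast+
    then show ?thesis using e(1) ends unfolding boundary_def induced_def by blast
  qed
qed

text \<open>A cut of size below c of the union splits the family into two smaller such families,
  and the members on either side of it are joined by fewer than c edges.\<close>
lemma card_crossing_edges_le:
  assumes "finite F" "finite \<W>"
    and "\<And>W. W \<in> \<W> \<Longrightarrow> W \<noteq> {} \<and> edge_connected ep c W (induced ep F W)"
    and "\<And>W1 W2. W1 \<in> \<W> \<Longrightarrow> W2 \<in> \<W> \<Longrightarrow> W1 \<noteq> W2 \<Longrightarrow> W1 \<inter> W2 = {}"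
    and "\<And>\<W>'. \<W>' \<subseteq> \<W> \<Longrightarrow> 2 \<le> card \<W>' \<Longrightarrow> \<not> edge_connected ep c (\<Union>\<W>') (induced ep F (\<Union>\<W>'))"
  shows "card (crossing_edges ep F \<W>) \<le> c * (card \<W> - 1)"
  using assms(2-)
proof (induction "card \<W>" arbitrary: \<W> rule: less_induct)
  case less
  show ?case
  proof (cases "card \<W> \<le> 1")
    case True
    then have "crossing_edges ep F \<W> = {}"
      using less.prems(1) unfolding crossing_edges_def by (auto simp: card_le_Suc0_iff_eq)
    then show ?thesis by simp
  next
    case False
    let ?U = "\<Union>\<W>"
    have "\<not> edge_connected ep c ?U (induced ep F ?U)" using less.prems(4)[of \<W>] False by simp
    then obtain C where C: "C \<subseteq> ?U" "C \<noteq> {}" "C \<noteq> ?U"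
      and cut: "card (boundary ep (induced ep F ?U) C) < c"
      unfolding edge_connected_def by (auto simp: not_le)
    have split: "W \<subseteq> C \<or> W \<inter> C = {}" if "W \<in> \<W>" for W
      using edge_connected_subset_or_disjoint[OF assms(1) _ _ cut] less.prems(2) that by blast
    define \<W>1 where "\<W>1 = {W \<in> \<W>. W \<subseteq> C}"
    define \<W>2 where "\<W>2 = {W \<in> \<W>. W \<inter> C = {}}"
    have parts: "\<W> = \<W>1 \<union> \<W>2" "\<W>1 \<inter> \<W>2 = {}"
      using split less.prems(2) unfolding \<W>1_def \<W>2_def by blast+
    have fin: "finite \<W>1" "finite \<W>2" using less.prems(1) unfolding \<W>1_def \<W>2_def by simp_all
    have "\<W>1 \<noteq> {}" "\<W>2 \<noteq> {}"
      using C(1-3) split unfolding \<W>1_def \<W>2_def by blast+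
    then have ne: "card \<W>1 \<ge> 1" "card \<W>2 \<ge> 1" using fin by (simp_all add: Suc_le_eq card_gt_0_iff)
    have card_\<W>: "card \<W> = card \<W>1 + card \<W>2"
      using parts fin card_Un_disjoint by simp
    have IH: "card (crossing_edges ep F \<W>') \<le> c * (card \<W>' - 1)"
      if sub: "\<W>' \<subseteq> \<W>" and smaller: "card \<W>' < card \<W>" for \<W>'
      using smaller
    proof (rule less.hyps)
      show "finite \<W>'" using finite_subset[OF sub less.prems(1)] .
      show "W \<noteq> {} \<and> edge_connected ep c W (induced ep F W)" if "W \<in> \<W>'" for W
        using less.prems(2) sub that by blast
      show "W1 \<inter> W2 = {}" if "W1 \<in> \<W>'" "W2 \<in> \<W>'" "W1 \<noteq> W2" for W1 W2
        using less.prems(3) sub that by blast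
      show "\<not> edge_connected ep c (\<Union>\<W>'') (induced ep F (\<Union>\<W>''))"
        if "\<W>'' \<subseteq> \<W>'" "2 \<le> card \<W>''" for \<W>''
        using less.prems(4) sub that by blast
    qed
    have "card (crossing_edges ep F \<W>) \<le> card (crossing_edges ep F \<W>1 \<union> crossing_edges ep F \<W>2
        \<union> boundary ep (induced ep F ?U) C)"
      by (intro card_mono crossing_edges_split)
         (use assms(1) parts(1) in \<open>auto simp: \<W>1_def \<W>2_def finite_boundary finite_induced crossing_edges_def\<close>)
    also have "\<dots> \<le> card (crossing_edges ep F \<W>1) + card (crossing_edges ep F \<W>2)
        + card (boundary ep (induced ep F ?U) C)"
      by (meson card_Un_le add_le_mono order_trans order.refl)
    also have "\<dots> \<le> c * (card \<W>1 - 1) + c * (card \<W>2 - 1) + c"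
      using IH[of \<W>1] IH[of \<W>2] parts card_\<W> ne cut by simp
    also have "\<dots> = c * (card \<W> - 1)"
      using card_\<W> ne by (cases "card \<W>1"; cases "card \<W>2") (simp_all add: algebra_simps)
    finally show ?thesis .
  qed
qed

lemma sum_card_incident_le:
  fixes ep :: "nat \<Rightarrow> nat \<times> nat" and X :: "nat set" and \<P> :: "nat set set"
  assumes "finite X" "finite \<P>" "\<And>P Q. P \<in> \<P> \<Longrightarrow> Q \<in> \<P> \<Longrightarrow> P \<noteq> Q \<Longrightarrow> P \<inter> Q = {}"
  shows "(\<Sum>P\<in>\<P>. card {e \<in> X. fst (ep e) \<in> P \<or> snd (ep e) \<in> P}) \<le> 2 * card X"
proof -
  have disj: "(\<Sum>P\<in>\<P>. card {e \<in> X. endpoint e \<in> P}) \<le> card X" for endpoint :: "nat \<Rightarrow> nat"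
  proof -
    have "(\<Sum>P\<in>\<P>. card {e \<in> X. endpoint e \<in> P}) = card (\<Union>P\<in>\<P>. {e \<in> X. endpoint e \<in> P})"
      using assms by (intro card_UN_disjoint[symmetric]) auto
    also have "\<dots> \<le> card X" using assms(1) by (intro card_mono) auto
    finally show ?thesis .
  qed
  have "(\<Sum>P\<in>\<P>. card {e \<in> X. fst (ep e) \<in> P \<or> snd (ep e) \<in> P})
      \<le> (\<Sum>P\<in>\<P>. card {e \<in> X. fst (ep e) \<in> P} + card {e \<in> X. snd (ep e) \<in> P})"
  proof (rule sum_mono)
    fix P
    have "{e \<in> X. fst (ep e) \<in> P \<or> snd (ep e) \<in> P} = {e \<in> X. fst (ep e) \<in> P} \<union> {e \<in> X. snd (ep e) \<in> P}"
      by blast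
    then show "card {e \<in> X. fst (ep e) \<in> P \<or> snd (ep e) \<in> P}
        \<le> card {e \<in> X. fst (ep e) \<in> P} + card {e \<in> X. snd (ep e) \<in> P}"
      by (simp add: card_Un_le)
  qed
  also have "\<dots> \<le> 2 * card X"
    using disj[of "\<lambda>e. fst (ep e)"] disj[of "\<lambda>e. snd (ep e)"] by (simp add: sum.distrib)
  finally show ?thesis .
qed

section \<open>Parts and connected components\<close>

lemma rtranclp_adj_edge_iff:
  "e \<in> H \<Longrightarrow> (adj ep H)\<^sup>*\<^sup>* v (fst (ep e)) \<longleftrightarrow> (adj ep H)\<^sup>*\<^sup>* v (snd (ep e))"
proof -
  assume "e \<in> H"
  then have "adj ep H (fst (ep e)) (snd (ep e))" "adj ep H (snd (ep e)) (fst (ep e))"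
    unfolding adj_def by auto
  then show ?thesis by (meson rtranclp.rtrancl_into_rtrancl)
qed

definition ecc_part :: "(nat \<Rightarrow> nat \<times> nat) \<Rightarrow> nat \<Rightarrow> nat set \<Rightarrow> nat set \<Rightarrow> nat \<Rightarrow> nat set" where
  "ecc_part ep c V F v = \<Union>{W. W \<subseteq> V \<and> v \<in> W \<and> edge_connected ep c W (induced ep F W)}"

locale ecc_graph =
  fixes ep :: "nat \<Rightarrow> nat \<times> nat" and V :: "nat set" and m c :: nat
  assumes finite_V: "finite V"
    and edge_ends: "e \<in> {1..m} \<Longrightarrow> fst (ep e) \<in> V \<and> snd (ep e) \<in> V"
    and c_pos: "1 \<le> c"
begin

abbreviation "E \<equiv> {1..m}"
abbreviation ecc :: "nat set \<Rightarrow> nat set \<Rightarrow> bool" where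
  "ecc F W \<equiv> edge_connected ep c W (induced ep F W)"
abbreviation part :: "nat set \<Rightarrow> nat \<Rightarrow> nat set" where
  "part F \<equiv> ecc_part ep c V F"

lemma finite_subset_E: "F \<subseteq> E \<Longrightarrow> finite F"
  using finite_subset by blast

lemma part_subset: "part F v \<subseteq> V"
  unfolding ecc_part_def by blast

lemma self_in_part: "v \<in> V \<Longrightarrow> v \<in> part F v"
  unfolding ecc_part_def by (rule UnionI[of "{v}"]) (simp_all add: edge_connected_singleton)

lemma subset_part: "W \<subseteq> V \<Longrightarrow> v \<in> W \<Longrightarrow> ecc F W \<Longrightarrow> W \<subseteq> part F v"
  unfolding ecc_part_def by blast

lemma part_edge_connected:
  assumes "finite F" "v \<in> V"
  shows "ecc F (part F v)"
proof -
  let ?\<W> = "{W. W \<subseteq> V \<and> v \<in> W \<and> ecc F W}"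
  have "finite ?\<W>" using finite_V by (simp add: finite_subset[of _ "Pow V"] subset_eq)
  moreover have "{v} \<in> ?\<W>" using assms(2) edge_connected_singleton[of ep c v] by simp
  ultimately show ?thesis
    unfolding ecc_part_def using edge_connected_Union[OF assms(1), of ?\<W> v] by blast
qed

lemma part_eq:
  assumes "finite F" "v \<in> V" "u \<in> part F v"
  shows "part F u = part F v"
proof
  have "u \<in> V" using assms(3) part_subset by blast
  show "part F v \<subseteq> part F u"
    by (rule subset_part[OF part_subset assms(3) part_edge_connected[OF assms(1,2)]])
  then have "v \<in> part F u" using self_in_part[OF assms(2)] by blast
  then show "part F u \<subseteq> part F v"
    by (rule subset_part[OF part_subset _ part_edge_connected[OF assms(1) \<open>u \<in> V\<close>]])
qed

lemma part_eq_if_common: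
  assumes "finite F" "u \<in> V" "v \<in> V" "x \<in> part F u" "x \<in> part F v"
  shows "part F u = part F v"
  using part_eq[OF assms(1,2,4)] part_eq[OF assms(1,3,5)] by simp

lemma ecc_components_eq_parts:
  assumes "finite F"
  shows "ecc_components ep c V F = part F ` V"
proof (intro set_eqI iffI)
  fix W assume "W \<in> ecc_components ep c V F"
  then have W: "W \<subseteq> V" "W \<noteq> {}" "ecc F W"
    and max: "\<And>W'. W \<subseteq> W' \<Longrightarrow> W' \<subseteq> V \<Longrightarrow> ecc F W' \<Longrightarrow> W' = W"
    unfolding ecc_components_def by auto
  obtain v where v: "v \<in> W" using W(2) by blast
  have "W \<subseteq> part F v" by (rule subset_part[OF W(1) v W(3)])
  then have "part F v = W"
    using max part_subset part_edge_connected[OF assms] v W(1) by blast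
  then show "W \<in> part F ` V" using v W(1) by blast
next
  fix W assume "W \<in> part F ` V"
  then obtain v where v: "v \<in> V" "W = part F v" by blast
  show "W \<in> ecc_components ep c V F"
    unfolding ecc_components_def
  proof (intro CollectI conjI allI impI)
    show "W \<subseteq> V" "ecc F W" using v part_subset part_edge_connected[OF assms] by auto
    show "W \<noteq> {}" using v self_in_part[OF v(1), of F] by blast
    fix W' assume "W \<subseteq> W' \<and> W' \<subseteq> V \<and> ecc F W'"
    then show "W' = W" using subset_part[of W' v F] v self_in_part[OF v(1)] by auto
  qed
qed

lemma mem_core_edges_iff:
  assumes "finite F" "F \<subseteq> E"
  shows "e \<in> core_edges ep c V F \<longleftrightarrow> e \<in> F \<and> snd (ep e) \<in> part F (fst (ep e))"
proof
  assume "e \<in> core_edges ep c V F"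
  then obtain v where "e \<in> F" "v \<in> V" "fst (ep e) \<in> part F v" "snd (ep e) \<in> part F v"
    unfolding core_edges_def ecc_components_eq_parts[OF assms(1)] by blast
  then show "e \<in> F \<and> snd (ep e) \<in> part F (fst (ep e))"
    using part_eq[OF assms(1)] by metis
next
  assume "e \<in> F \<and> snd (ep e) \<in> part F (fst (ep e))"
  moreover have "fst (ep e) \<in> V" using calculation assms(2) edge_ends by blast
  ultimately show "e \<in> core_edges ep c V F"
    unfolding core_edges_def ecc_components_eq_parts[OF assms(1)] using self_in_part by blast
qed

lemma induced_part_subset_core_edges:
  assumes "finite F" "F \<subseteq> E" "v \<in> V"
  shows "induced ep F (part F v) \<subseteq> core_edges ep c V F"
proof
  fix e assume "e \<in> induced ep F (part F v)"
  then have "e \<in> F" "fst (ep e) \<in> part F v" "snd (ep e) \<in> part F v"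
    unfolding induced_def by auto
  then show "e \<in> core_edges ep c V F"
    using mem_core_edges_iff[OF assms(1,2)] part_eq[OF assms(1,3)] by metis
qed

lemma part_edge_connected_superset:
  assumes "finite F" "F \<subseteq> E" "core_edges ep c V F \<subseteq> F'" "finite F'" "v \<in> V"
  shows "ecc F' (part F v)"
proof (rule edge_connected_mono[OF part_edge_connected[OF assms(1,5)]])
  show "induced ep F (part F v) \<subseteq> induced ep F' (part F v)"
    using induced_part_subset_core_edges[OF assms(1,2,5)] assms(3)
    unfolding induced_def by blast
qed (use assms(4) finite_induced in blast)

lemma part_subset_part:
  assumes "finite F" "F \<subseteq> E" "core_edges ep c V F \<subseteq> F'" "finite F'" "v \<in> V"
  shows "part F v \<subseteq> part F' v"
  by (rule subset_part[OF part_subset self_in_part part_edge_connected_superset]) (use assms in auto)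

lemma reachable_in_part:
  assumes "finite F" "G \<subseteq> E" "\<And>e. e \<in> G \<Longrightarrow> snd (ep e) \<in> part F (fst (ep e))"
    and "v \<in> V" "(adj ep G)\<^sup>*\<^sup>* v u"
  shows "u \<in> part F v"
  using assms(5)
proof (induction rule: rtranclp_induct)
  case base
  then show ?case using self_in_part[OF assms(4)] .
next
  case (step y z)
  obtain e where e: "e \<in> G" "ep e = (y, z) \<or> ep e = (z, y)"
    using step.hyps(2) unfolding adj_def by blast
  have ends: "fst (ep e) \<in> V" "snd (ep e) \<in> V" using e(1) assms(2) edge_ends by blast+
  have same: "part F (snd (ep e)) = part F (fst (ep e))"
    by (rule part_eq[OF assms(1) ends(1) assms(3)[OF e(1)]])
  have "z \<in> V" using ends e(2) by auto
  have "part F z = part F y" using e(2) same by (elim disjE) simp_all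
  also have "\<dots> = part F v" by (rule part_eq[OF assms(1,4) step.IH])
  finally show ?case using self_in_part[OF \<open>z \<in> V\<close>, of F] by simp
qed

text \<open>A part lies inside one component because c \<ge> 1: every cut of the part is crossed by
  one of its core edges.\<close>
lemma components_eq_parts:
  assumes "finite F" "F \<subseteq> E" "core_edges ep c V F \<subseteq> G" "G \<subseteq> E"
    and inside: "\<And>e. e \<in> G \<Longrightarrow> snd (ep e) \<in> part F (fst (ep e))"
  shows "components ep V G = part F ` V"
  unfolding components_def
proof (rule image_cong[OF refl])
  fix v assume v: "v \<in> V"
  let ?R = "{u \<in> V. (adj ep G)\<^sup>*\<^sup>* v u}"
  have "?R \<subseteq> part F v" using reachable_in_part[OF assms(1,4) inside v] by blast
  moreover have "part F v \<subseteq> ?R"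
  proof (rule ccontr)
    let ?P = "part F v"
    assume "\<not> ?P \<subseteq> ?R"
    moreover have "v \<in> ?R \<inter> ?P" using v self_in_part[OF v] by simp
    ultimately have "?R \<inter> ?P \<noteq> ?P" "?R \<inter> ?P \<noteq> {}" by blast+
    then have "c \<le> card (boundary ep (induced ep F ?P) (?R \<inter> ?P))"
      by (intro edge_connectedD[OF part_edge_connected[OF assms(1) v]]) auto
    then have "boundary ep (induced ep F ?P) (?R \<inter> ?P) \<noteq> {}" using c_pos by auto
    then obtain e where e: "e \<in> F" "fst (ep e) \<in> ?P" "snd (ep e) \<in> ?P"
      "(fst (ep e) \<in> ?R) \<noteq> (snd (ep e) \<in> ?R)"
      unfolding boundary_def induced_def by blast
    have "e \<in> G"
      using assms(3) mem_core_edges_iff[OF assms(1,2)] part_eq[OF assms(1) v e(2)] e(1,3) by auto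
    moreover have "fst (ep e) \<in> V" "snd (ep e) \<in> V" using e(2,3) part_subset by blast+
    ultimately show False using e(4) rtranclp_adj_edge_iff[of e G ep v] by simp
  qed
  ultimately show "?R = part F v" by blast
qed

lemma components_core_edges:
  assumes "finite F" "F \<subseteq> E"
  shows "components ep V (core_edges ep c V F) = part F ` V"
  using assms mem_core_edges_iff[OF assms]
  by (intro components_eq_parts) (auto simp: core_edges_def)

lemma boundary_component_disjoint:
  assumes "H \<subseteq> E" "C \<in> components ep V H"
  shows "H \<inter> boundary ep G C = {}"
proof -
  obtain v where C: "C = {u \<in> V. (adj ep H)\<^sup>*\<^sup>* v u}"
    using assms(2) unfolding components_def by blast
  have "fst (ep e) \<in> C \<longleftrightarrow> snd (ep e) \<in> C" if "e \<in> H" for e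
    using rtranclp_adj_edge_iff[OF that, of ep v] that assms(1) edge_ends unfolding C by blast
  then show ?thesis unfolding boundary_def by blast
qed

end

section \<open>Peeling\<close>

definition peel :: "(nat \<Rightarrow> nat \<times> nat) \<Rightarrow> nat set \<Rightarrow> nat \<Rightarrow> nat set \<Rightarrow> nat set \<Rightarrow> nat set" where
  "peel ep V \<delta> H G =
     (THE T. (peel_step ep V \<delta>)\<^sup>*\<^sup>* (G, H) (T, H) \<and> \<not> (\<exists>x. peel_step ep V \<delta> (T, H) x))"

context ecc_graph
begin

abbreviation peel_final :: "nat \<Rightarrow> nat set \<times> nat set \<Rightarrow> bool" where
  "peel_final \<delta> x \<equiv> \<not> (\<exists>y. peel_step ep V \<delta> x y)"

lemma peel_stepE:
  assumes "peel_step ep V \<delta> (G, H) (G', H')" "H \<subseteq> E"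
  obtains C where "C \<in> components ep V H" "H' = H" "G' = G - boundary ep G C"
    "H \<inter> boundary ep G C = {}" "0 < card (boundary ep G C)" "card (boundary ep G C) < \<delta>"
  using assms(1)
proof cases
  case (1 C)
  moreover have "H \<inter> boundary ep G C = {}" by (rule boundary_component_disjoint[OF assms(2) 1(3)])
  ultimately show thesis using that by blast
qed

lemma peel_steps_mono:
  assumes "(peel_step ep V \<delta>)\<^sup>*\<^sup>* (G, H) (G', H')" "H \<subseteq> E"
  shows "H' = H \<and> G' \<subseteq> G \<and> H \<inter> G \<subseteq> G'"
  using assms(1)
proof (induction rule: rtranclp_induct2)
  case (step G1 H1 G2 H2)
  then show ?case by (elim peel_stepE) (use assms(2) in auto)
qed simp

lemma peel_final_boundary:
  assumes "peel_final \<delta> (T, H)" "finite T" "C \<in> components ep V H"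
  shows "boundary ep T C = {} \<or> \<delta> \<le> card (boundary ep T C)"
proof (rule ccontr)
  assume "\<not> (boundary ep T C = {} \<or> \<delta> \<le> card (boundary ep T C))"
  then have "peel_step ep V \<delta> (T, H) (T - boundary ep T C, H - boundary ep T C)"
    using assms(2,3) finite_boundary by (intro peel_step.intros) (auto simp: card_gt_0_iff)
  then show False using assms(1) by blast
qed

text \<open>Every final state below G lies below every state reachable from G: a step only removes
  a boundary of size in (0, \<delta>), which the final state meets in no edge.\<close>
lemma peel_final_subset:
  assumes "peel_final \<delta> (T, H)" "T \<subseteq> G" "G \<subseteq> E" "H \<subseteq> E"
    and "(peel_step ep V \<delta>)\<^sup>*\<^sup>* (G, H) (G', H')"
  shows "T \<subseteq> G'"
  using assms(5)
proof (induction rule: rtranclp_induct2)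
  case (step G1 H1 G2 H2)
  have "H1 = H" "G1 \<subseteq> G" using peel_steps_mono[OF step.hyps(1) assms(4)] by simp_all
  then obtain C where C: "C \<in> components ep V H" "G2 = G1 - boundary ep G1 C"
    "card (boundary ep G1 C) < \<delta>"
    using step.hyps(2) assms(4) by (elim peel_stepE) auto
  have "finite G1" using \<open>G1 \<subseteq> G\<close> assms(3) finite_subset_E by blast
  then have "card (boundary ep T C) \<le> card (boundary ep G1 C)"
    by (intro card_mono finite_boundary boundary_mono step.IH)
  then have "boundary ep T C = {}"
    using peel_final_boundary[OF assms(1) _ C(1)] C(3) assms(2,3) finite_subset_E by fastforce
  then show ?case using step.IH C(2) unfolding boundary_def by blast
qed (use assms(2) in simp)

lemma peel_final_exists:
  assumes "G \<subseteq> E" "H \<subseteq> E"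
  shows "\<exists>T. (peel_step ep V \<delta>)\<^sup>*\<^sup>* (G, H) (T, H) \<and> peel_final \<delta> (T, H)"
  using assms(1)
proof (induction "card G" arbitrary: G rule: less_induct)
  case less
  show ?case
  proof (cases "peel_final \<delta> (G, H)")
    case False
    then obtain G' H' where step: "peel_step ep V \<delta> (G, H) (G', H')" by auto
    then obtain C where C: "H' = H" "G' = G - boundary ep G C" "0 < card (boundary ep G C)"
      using assms(2) by (elim peel_stepE) auto
    have "finite G" using less.prems finite_subset_E by blast
    moreover have "G' \<subset> G"
      using C(2,3) card_gt_0_iff[of "boundary ep G C"] unfolding boundary_def by blast
    ultimately have "card G' < card G" by (rule psubset_card_mono)
    then obtain T where "(peel_step ep V \<delta>)\<^sup>*\<^sup>* (G', H) (T, H)" "peel_final \<delta> (T, H)"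
      using less.hyps[of G'] less.prems C(2) by blast
    then show ?thesis using step C(1) by (meson converse_rtranclp_into_rtranclp)
  qed blast
qed

lemma peel_eqI:
  assumes "G \<subseteq> E" "H \<subseteq> E"
    and "(peel_step ep V \<delta>)\<^sup>*\<^sup>* (G, H) (T, H')" "peel_final \<delta> (T, H')"
  shows "T = peel ep V \<delta> H G \<and> H' = H"
proof -
  have "H' = H" "T \<subseteq> G" using peel_steps_mono[OF assms(3,2)] by simp_all
  have "peel ep V \<delta> H G = T"
    unfolding peel_def
  proof (rule the_equality)
    show "(peel_step ep V \<delta>)\<^sup>*\<^sup>* (G, H) (T, H) \<and> peel_final \<delta> (T, H)"
      using assms(3,4) \<open>H' = H\<close> by simp
    fix T' assume T': "(peel_step ep V \<delta>)\<^sup>*\<^sup>* (G, H) (T', H) \<and> peel_final \<delta> (T', H)"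
    then have "T' \<subseteq> G" using peel_steps_mono assms(2) by blast
    show "T' = T"
    proof (rule antisym)
      show "T' \<subseteq> T"
        using peel_final_subset[of \<delta> T' H G T H] T' \<open>T' \<subseteq> G\<close> assms \<open>H' = H\<close> by blast
      show "T \<subseteq> T'"
        using peel_final_subset[of \<delta> T H G T' H] T' \<open>T \<subseteq> G\<close> assms \<open>H' = H\<close> by blast
    qed
  qed
  then show ?thesis using \<open>H' = H\<close> by simp
qed

lemma peel_run:
  assumes "G \<subseteq> E" "H \<subseteq> E"
  shows "(peel_step ep V \<delta>)\<^sup>*\<^sup>* (G, H) (peel ep V \<delta> H G, H)" "peel_final \<delta> (peel ep V \<delta> H G, H)"
proof -
  obtain T where T: "(peel_step ep V \<delta>)\<^sup>*\<^sup>* (G, H) (T, H)" "peel_final \<delta> (T, H)"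
    using peel_final_exists[OF assms] by blast
  moreover have "T = peel ep V \<delta> H G" using peel_eqI[OF assms T] by simp
  ultimately show "(peel_step ep V \<delta>)\<^sup>*\<^sup>* (G, H) (peel ep V \<delta> H G, H)"
    "peel_final \<delta> (peel ep V \<delta> H G, H)" by simp_all
qed

lemma peel_subset: "G \<subseteq> E \<Longrightarrow> H \<subseteq> E \<Longrightarrow> peel ep V \<delta> H G \<subseteq> G"
  using peel_steps_mono[OF peel_run(1)] by blast

lemma Int_subset_peel: "G \<subseteq> E \<Longrightarrow> H \<subseteq> E \<Longrightarrow> H \<inter> G \<subseteq> peel ep V \<delta> H G"
  using peel_steps_mono[OF peel_run(1)] by blast

lemma peel_boundary:
  assumes "G \<subseteq> E" "H \<subseteq> E" "C \<in> components ep V H"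
  shows "boundary ep (peel ep V \<delta> H G) C = {} \<or> \<delta> \<le> card (boundary ep (peel ep V \<delta> H G) C)"
  using peel_final_boundary[OF peel_run(2)[OF assms(1,2)] _ assms(3)] peel_subset[OF assms(1,2)]
    assms(1) finite_subset_E by blast

section \<open>Active parts in one round\<close>

definition active_parts :: "nat set \<Rightarrow> nat set \<Rightarrow> nat set set" where
  "active_parts F T = {P \<in> part F ` V. boundary ep T P \<noteq> {}}"

lemma finite_active_parts: "finite (active_parts F T)"
  unfolding active_parts_def using finite_V by simp

lemma card_active_parts_le: "card (active_parts F T) \<le> card V"
proof -
  have "card (active_parts F T) \<le> card (part F ` V)"
    unfolding active_parts_def using finite_V by (intro card_mono) auto
  also have "\<dots> \<le> card V" by (rule card_image_le[OF finite_V])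
  finally show ?thesis .
qed

lemma card_crossing_edges_parts_le:
  assumes "finite F" "X \<subseteq> V"
  shows "card (crossing_edges ep F (part F ` X)) \<le> c * (card (part F ` X) - 1)"
proof (rule card_crossing_edges_le[OF assms(1)])
  show "finite (part F ` X)" using finite_subset[OF assms(2) finite_V] by simp
  show "W \<noteq> {} \<and> ecc F W" if "W \<in> part F ` X" for W
    using that assms self_in_part part_edge_connected by blast
  show "W1 \<inter> W2 = {}" if "W1 \<in> part F ` X" "W2 \<in> part F ` X" "W1 \<noteq> W2" for W1 W2
    using that assms part_eq_if_common[OF assms(1)] by blast
  show "\<not> ecc F (\<Union>\<W>)" if \<W>: "\<W> \<subseteq> part F ` X" "2 \<le> card \<W>" for \<W>
  proof
    assume ecc: "ecc F (\<Union>\<W>)"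
    have "finite \<W>" "\<not> card \<W> \<le> Suc 0" using \<W>(2) card.infinite by fastforce+
    then obtain W1 W2 where W: "W1 \<in> \<W>" "W2 \<in> \<W>" "W1 \<noteq> W2"
      using card_le_Suc0_iff_eq by blast
    obtain a b where ab: "a \<in> V" "W1 = part F a" "b \<in> V" "W2 = part F b"
      using W(1,2) \<W>(1) assms(2) by blast
    have "\<Union>\<W> \<subseteq> V" using \<W>(1) part_subset by blast
    moreover have "a \<in> \<Union>\<W>" using W(1) ab(1,2) self_in_part by blast
    ultimately have "\<Union>\<W> \<subseteq> part F a" using subset_part ecc by blast
    then have "b \<in> part F a" using W(2) ab(3,4) self_in_part by blast
    then show False using part_eq[OF assms(1) ab(1)] ab(2,4) W(3) by simp
  qed
qed

text \<open>One round of the construction: F and F' are the sampled edges of two consecutive levels,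
  T and T' the graphs left after peeling, and R the edges sampled in the new round. The old
  (active) parts grow into the merged parts of F'; the unmerged ones stay parts of F'.\<close>
context
  fixes F F' T T' R :: "nat set"
  assumes F: "finite F" "F \<subseteq> E"
    and F': "F' \<subseteq> E" "core_edges ep c V F \<subseteq> F'" "F' \<subseteq> T"
    and T: "T' \<subseteq> T" "T \<subseteq> E"
    and R: "T \<inter> R \<subseteq> F'"
begin

abbreviation (input) "old \<equiv> active_parts F T"
abbreviation (input) "merged \<equiv> part F' ` {v \<in> V. part F v \<in> old}"
abbreviation (input) "unmerged \<equiv> old \<inter> part F' ` V"

lemma finite_F': "finite F'"
  using F'(1) finite_subset_E by blast

lemma part_subset_next: "v \<in> V \<Longrightarrow> part F v \<subseteq> part F' v"
  using part_subset_part[OF F F'(2) finite_F'] .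

lemma part_next_eq_if_isolated:
  assumes "v \<in> V" "boundary ep T (part F v) = {}"
  shows "part F' v = part F v"
proof (rule ccontr)
  assume "part F' v \<noteq> part F v"
  then have "c \<le> card (boundary ep (induced ep F' (part F' v)) (part F v))"
    using part_subset_next[OF assms(1)] self_in_part[OF assms(1), of F]
    by (intro edge_connectedD[OF part_edge_connected[OF finite_F' assms(1)]]) auto
  moreover have "boundary ep (induced ep F' (part F' v)) (part F v) \<subseteq> boundary ep T (part F v)"
    using F'(3) unfolding boundary_def induced_def by blast
  ultimately show False using assms(2) c_pos by simp
qed

lemma active_parts_next_subset_merged: "active_parts F' T' \<subseteq> merged"
proof
  fix W assume "W \<in> active_parts F' T'"
  then obtain v where v: "v \<in> V" "W = part F' v" and "boundary ep T' W \<noteq> {}"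
    unfolding active_parts_def by blast
  then have "boundary ep T (part F v) \<noteq> {}"
    using part_next_eq_if_isolated[OF v(1)] boundary_mono[OF T(1), of ep W] by auto
  then show "W \<in> merged" using v unfolding active_parts_def by blast
qed

lemma unmerged_subset_merged: "unmerged \<subseteq> merged"
proof
  fix P assume "P \<in> unmerged"
  then obtain u w where P: "P \<in> old" "u \<in> V" "P = part F' u" "w \<in> V" "P = part F w"
    unfolding active_parts_def by blast
  then have "part F u = P" using part_eq[OF F(1) P(4)] self_in_part[OF P(2)] by metis
  then show "P \<in> merged" using P by blast
qed

lemma card_old_eq_sum_merged: "card old = (\<Sum>W\<in>merged. card {P \<in> old. P \<subseteq> W})"
proof -
  have "old = (\<Union>W\<in>merged. {P \<in> old. P \<subseteq> W})"
    unfolding active_parts_def using part_subset_next by blast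
  then have "card old = card (\<Union>W\<in>merged. {P \<in> old. P \<subseteq> W})" by (rule arg_cong)
  also have "\<dots> = (\<Sum>W\<in>merged. card {P \<in> old. P \<subseteq> W})"
  proof (rule card_UN_disjoint)
    show "finite merged" using finite_V by simp
    show "\<forall>W\<in>merged. finite {P \<in> old. P \<subseteq> W}" using finite_active_parts by simp
    show "\<forall>W1\<in>merged. \<forall>W2\<in>merged. W1 \<noteq> W2 \<longrightarrow>
        {P \<in> old. P \<subseteq> W1} \<inter> {P \<in> old. P \<subseteq> W2} = {}"
    proof (intro ballI impI)
      fix W1 W2 assume W: "W1 \<in> merged" "W2 \<in> merged" "W1 \<noteq> W2"
      have "P = {}" if "P \<subseteq> W1" "P \<subseteq> W2" for P
        using that W part_eq_if_common[OF finite_F'] by blast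
      moreover have "{} \<notin> old" unfolding active_parts_def boundary_def by blast
      ultimately show "{P \<in> old. P \<subseteq> W1} \<inter> {P \<in> old. P \<subseteq> W2} = {}" by blast
    qed
  qed
  finally show ?thesis .
qed

lemma two_le_card_old_below:
  assumes "W \<in> merged" "W \<notin> old"
  shows "2 \<le> card {P \<in> old. P \<subseteq> W}"
proof -
  obtain v where v: "v \<in> V" "W = part F' v" "part F v \<in> old"
    using assms(1) by blast
  then have "part F v \<subset> W" using part_subset_next[OF v(1)] assms(2) by auto
  then obtain u where u: "u \<in> W" "u \<notin> part F v" by blast
  have uV: "u \<in> V" using u(1) v(2) part_subset by blast
  have Wu: "part F' u = W" using part_eq[OF finite_F' v(1)] u(1) v(2) by simp
  have "part F u \<noteq> part F v" using u(2) self_in_part[OF uV] by blast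
  moreover have "part F u \<in> old"
  proof (rule ccontr)
    assume "part F u \<notin> old"
    then have "W = part F u"
      using part_next_eq_if_isolated[OF uV] Wu uV unfolding active_parts_def by blast
    moreover have "v \<in> W" using self_in_part[OF v(1)] v(2) by simp
    ultimately have "part F v = part F u" using part_eq[OF F(1) uV] by simp
    then show False using u(2) self_in_part[OF uV] by simp
  qed
  moreover have "part F u \<subseteq> W" "part F v \<subseteq> W"
    using part_subset_next uV v(1,2) Wu by blast+
  ultimately have "{part F v, part F u} \<subseteq> {P \<in> old. P \<subseteq> W}" using v(3) by blast
  moreover have "card {part F v, part F u} = 2" using \<open>part F u \<noteq> part F v\<close> by simp
  moreover have "finite {P \<in> old. P \<subseteq> W}" using finite_active_parts by simp
  ultimately show ?thesis using card_mono by metis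
qed

text \<open>Every old part lies in exactly one merged part, and a merged part that is not itself
  an old part contains at least two of them.\<close>
lemma card_merged_le: "2 * card merged \<le> card old + card unmerged"
proof -
  have fin: "finite merged" using finite_V by simp
  have "card old = (\<Sum>W\<in>merged - unmerged. card {P \<in> old. P \<subseteq> W})
      + (\<Sum>W\<in>unmerged. card {P \<in> old. P \<subseteq> W})"
    unfolding card_old_eq_sum_merged by (rule sum.subset_diff[OF unmerged_subset_merged fin])
  moreover have "(\<Sum>W\<in>merged - unmerged. 2) \<le> (\<Sum>W\<in>merged - unmerged. card {P \<in> old. P \<subseteq> W})"
    using two_le_card_old_below by (intro sum_mono) blast
  moreover have "(\<Sum>W\<in>unmerged. 1) \<le> (\<Sum>W\<in>unmerged. card {P \<in> old. P \<subseteq> W})"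
    using finite_active_parts by (intro sum_mono) (auto simp: Suc_le_eq card_gt_0_iff)
  moreover have "card merged = card (merged - unmerged) + card unmerged"
    using card_Diff_subset[OF finite_subset[OF unmerged_subset_merged fin] unmerged_subset_merged]
      card_mono[OF fin unmerged_subset_merged] by simp
  ultimately show ?thesis by simp
qed

lemma boundary_unmerged_subset_crossing:
  assumes "P \<in> unmerged"
  shows "boundary ep T P \<inter> R \<subseteq> {e \<in> crossing_edges ep F' merged. fst (ep e) \<in> P \<or> snd (ep e) \<in> P}"
proof
  fix e assume e: "e \<in> boundary ep T P \<inter> R"
  obtain u w where P: "u \<in> V" "P = part F' u" "w \<in> V" "P = part F w"
    using assms unfolding active_parts_def by blast
  have eF': "e \<in> F'" and eT: "e \<in> T" using e R unfolding boundary_def by blast+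
  have ends: "fst (ep e) \<in> V" "snd (ep e) \<in> V" using eT T(2) edge_ends by blast+
  have parts: "part F x = P" "part F' x = P" if "x \<in> P" for x
    using that P part_eq[OF F(1) P(3)] part_eq[OF finite_F' P(1)] by simp_all
  have key: "part G x \<noteq> part G y" if "G = F \<or> G = F'" "x \<in> P" "y \<in> V" "y \<notin> P" for G x y
    using parts[OF that(2)] self_in_part[OF that(3), of G] that(1,4) by auto
  have differ: "part G (fst (ep e)) \<noteq> part G (snd (ep e))" if "G = F \<or> G = F'" for G
  proof (cases "fst (ep e) \<in> P")
    case True
    then have "snd (ep e) \<notin> P" using e unfolding boundary_def by blast
    then show ?thesis using key[OF that True ends(2)] by blast
  next
    case False
    then have "snd (ep e) \<in> P" using e unfolding boundary_def by blast
    then show ?thesis using key[OF that _ ends(1) False] by metis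
  qed
  have in_old: "part F x \<in> old"
    if "x \<in> V" "y \<in> V" "part F x \<noteq> part F y" "ep e = (x, y) \<or> ep e = (y, x)" for x y
  proof -
    have "y \<notin> part F x" using part_eq[OF F(1) that(1)] that(3) by metis
    then have "e \<in> boundary ep T (part F x)"
      using eT self_in_part[OF that(1)] that(4) unfolding boundary_def by auto
    then show ?thesis unfolding active_parts_def using that(1) by blast
  qed
  have "part F (fst (ep e)) \<in> old" "part F (snd (ep e)) \<in> old"
    using in_old[OF ends differ[of F]] in_old[OF ends(2,1) differ[of F, symmetric]] by simp_all
  moreover note differ[of F']
  ultimately have "e \<in> crossing_edges ep F' merged"
    unfolding crossing_edges_def using eF' ends self_in_part by blast
  then show "e \<in> {e \<in> crossing_edges ep F' merged. fst (ep e) \<in> P \<or> snd (ep e) \<in> P}"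
    using e unfolding boundary_def by blast
qed


text \<open>A part that is not merged but receives 4c sampled boundary edges sends them to other
  merged parts; each such edge is counted at most twice, and there are at most c (k - 1) of
  them among the k merged parts.\<close>
lemma card_rich_unmerged_le:
  "2 * card {P \<in> unmerged. 4 * c \<le> card (boundary ep T P \<inter> R)} \<le> card merged"
proof -
  define rich where "rich = {P \<in> unmerged. 4 * c \<le> card (boundary ep T P \<inter> R)}"
  define cross where "cross = crossing_edges ep F' merged"
  have fin_rich: "finite rich" unfolding rich_def using finite_active_parts by simp
  have "4 * c * card rich = (\<Sum>P\<in>rich. 4 * c)" by simp
  also have "\<dots> \<le> (\<Sum>P\<in>rich. card {e \<in> cross. fst (ep e) \<in> P \<or> snd (ep e) \<in> P})"
  proof (rule sum_mono)
    fix P assume P: "P \<in> rich"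
    then have "4 * c \<le> card (boundary ep T P \<inter> R)" unfolding rich_def by simp
    also have "\<dots> \<le> card {e \<in> cross. fst (ep e) \<in> P \<or> snd (ep e) \<in> P}"
      using P boundary_unmerged_subset_crossing finite_F' unfolding rich_def cross_def crossing_edges_def
      by (intro card_mono) auto
    finally show "4 * c \<le> card {e \<in> cross. fst (ep e) \<in> P \<or> snd (ep e) \<in> P}" .
  qed
  also have "\<dots> \<le> 2 * card cross"
  proof (rule sum_card_incident_le[OF _ fin_rich])
    show "finite cross" unfolding cross_def crossing_edges_def using finite_F' by simp
    show "P \<inter> Q = {}" if "P \<in> rich" "Q \<in> rich" "P \<noteq> Q" for P Q
      using that part_eq_if_common[OF F(1)] unfolding rich_def active_parts_def by blast
  qed
  also have "\<dots> \<le> 2 * (c * (card merged - 1))"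
    unfolding cross_def using card_crossing_edges_parts_le[OF finite_F', of "{v \<in> V. part F v \<in> old}"]
    by simp
  finally have "c * (2 * card rich) \<le> c * (card merged - 1)" by simp
  then show ?thesis unfolding rich_def using c_pos by simp
qed

lemma card_active_parts_next_le:
  "3 * card (active_parts F' T') \<le> 2 * card old + 2 * card {P \<in> old. card (boundary ep T P \<inter> R) < 4 * c}"
proof -
  let ?rich = "{P \<in> unmerged. 4 * c \<le> card (boundary ep T P \<inter> R)}"
  let ?poor = "{P \<in> old. card (boundary ep T P \<inter> R) < 4 * c}"
  have "card (active_parts F' T') \<le> card merged"
    using finite_V by (intro card_mono active_parts_next_subset_merged) simp
  moreover have "card unmerged \<le> card (?rich \<union> ?poor)"
    using finite_active_parts by (intro card_mono) auto
  moreover have "card (?rich \<union> ?poor) \<le> card ?rich + card ?poor" by (rule card_Un_le)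
  ultimately show ?thesis using card_merged_le card_rich_unmerged_le by linarith
qed

end

end

section \<open>The levels of the construction\<close>

lemma sampled_Suc: "sampled r s (Suc i) = sampled r s i \<union> r (Suc i) ` {1..s}"
  unfolding sampled_def by (auto simp: atLeastAtMostSuc_conv)

lemma sampled_upd: "i < k \<Longrightarrow> sampled (r(k := y)) s i = sampled r s i"
  unfolding sampled_def by auto

definition levels_succeed :: "(nat \<Rightarrow> nat \<times> nat) \<Rightarrow> nat set \<Rightarrow> nat \<Rightarrow> nat \<Rightarrow> nat \<Rightarrow> nat \<Rightarrow> nat
    \<Rightarrow> (nat \<Rightarrow> nat \<Rightarrow> nat) \<Rightarrow> bool" where
  "levels_succeed ep V m c \<delta> s l r \<longleftrightarrow>
     (\<forall>Gs Hs. level_run ep V m c \<delta> s l r Gs Hs \<longrightarrow>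
        (\<forall>C \<in> components ep V (Gs l). edge_connected ep c C (induced ep (Gs l) C)) \<and>
        components ep V (Gs l) = components ep V (Hs l))"

locale sampling_levels = ecc_graph + fixes \<delta> s :: nat
begin

text \<open>Shifted by one against the paper: level_graph r (Suc i) is G_i, and
  level_graph r 0 is G_{-1}, the whole graph.\<close>
primrec level_graph :: "(nat \<Rightarrow> nat \<Rightarrow> nat) \<Rightarrow> nat \<Rightarrow> nat set" where
  "level_graph r 0 = E"
| "level_graph r (Suc i) =
     peel ep V \<delta> (core_edges ep c V (sampled r s i \<inter> level_graph r i)) (level_graph r i)"

abbreviation level_sample :: "(nat \<Rightarrow> nat \<Rightarrow> nat) \<Rightarrow> nat \<Rightarrow> nat set" where
  "level_sample r i \<equiv> sampled r s i \<inter> level_graph r i"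

abbreviation level_active :: "(nat \<Rightarrow> nat \<Rightarrow> nat) \<Rightarrow> nat \<Rightarrow> nat set set" where
  "level_active r i \<equiv> active_parts (level_sample r i) (level_graph r (Suc i))"

lemma level_graph_subset_E: "level_graph r i \<subseteq> E"
proof (induction i)
  case (Suc i)
  have "core_edges ep c V (level_sample r i) \<subseteq> E" using Suc unfolding core_edges_def by blast
  then have "level_graph r (Suc i) \<subseteq> level_graph r i" using peel_subset[OF Suc] by simp
  then show ?case using Suc by blast
qed simp

lemma level_sample_subset_E: "level_sample r i \<subseteq> E"
  using level_graph_subset_E by blast

lemma finite_level_sample: "finite (level_sample r i)"
  using level_sample_subset_E finite_subset_E by blast

lemma core_edges_level_sample_subset_E: "core_edges ep c V (level_sample r i) \<subseteq> E"
  using level_sample_subset_E unfolding core_edges_def by blast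

lemma level_graph_Suc_subset: "level_graph r (Suc i) \<subseteq> level_graph r i"
  using peel_subset[OF level_graph_subset_E core_edges_level_sample_subset_E] by simp

lemma core_edges_subset_level_graph: "core_edges ep c V (level_sample r i) \<subseteq> level_graph r (Suc i)"
proof -
  have "core_edges ep c V (level_sample r i) \<subseteq> core_edges ep c V (level_sample r i) \<inter> level_graph r i"
    unfolding core_edges_def by blast
  also have "\<dots> \<subseteq> level_graph r (Suc i)"
    using Int_subset_peel[OF level_graph_subset_E core_edges_level_sample_subset_E] by simp
  finally show ?thesis .
qed

lemma boundary_level_active:
  assumes "P \<in> level_active r i"
  shows "\<delta> \<le> card (boundary ep (level_graph r (Suc i)) P)"
proof -
  have "P \<in> components ep V (core_edges ep c V (level_sample r i))"
    using assms components_core_edges[OF finite_level_sample level_sample_subset_E]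
    unfolding active_parts_def by blast
  then have "boundary ep (level_graph r (Suc i)) P = {} \<or>
      \<delta> \<le> card (boundary ep (level_graph r (Suc i)) P)"
    by (simp add: peel_boundary[OF level_graph_subset_E core_edges_level_sample_subset_E])
  then show ?thesis using assms unfolding active_parts_def by blast
qed

lemma level_graph_upd: "j \<le> Suc i \<Longrightarrow> level_graph (r(Suc i := y)) j = level_graph r j"
  by (induction j) (simp_all add: sampled_upd)

lemma level_active_upd: "level_active (r(Suc i := y)) i = level_active r i"
  by (simp add: level_graph_upd sampled_upd)

lemma level_run_eq:
  assumes "level_run ep V m c \<delta> s l r Gs Hs" "i \<le> l"
  shows "Gs i = level_graph r (Suc i) \<and> Hs i = core_edges ep c V (level_sample r i)"
proof -
  have run: "(peel_step ep V \<delta>)\<^sup>*\<^sup>* (level_graph r j, core_edges ep c V (level_sample r j)) (Gs j, Hs j)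
      \<and> peel_final \<delta> (Gs j, Hs j)"
    if "j \<le> l" "j = 0 \<or> Gs (j - 1) = level_graph r j" for j
    using assms(1) that unfolding level_run_def Let_def by (cases j) auto
  have step: "Gs j = level_graph r (Suc j) \<and> Hs j = core_edges ep c V (level_sample r j)"
    if "j \<le> l" "j = 0 \<or> Gs (j - 1) = level_graph r j" for j
    using peel_eqI[OF level_graph_subset_E core_edges_level_sample_subset_E
        run[OF that, THEN conjunct1] run[OF that, THEN conjunct2]] by simp
  show ?thesis
    using assms(2) by (induction i) (use step in auto)
qed

text \<open>Once no part is active, the parts are separated in G_l, so they are its connected
  components, and they stay c-edge-connected since G_l keeps the core edges.\<close>
lemma components_level_graph_if_inactive:
  assumes "level_active r l = {}"
  defines "G \<equiv> level_graph r (Suc l)" and "F \<equiv> level_sample r l"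
  shows "(\<forall>C \<in> components ep V G. ecc G C) \<and>
    components ep V G = components ep V (core_edges ep c V F)"
proof -
  have F: "finite F" "F \<subseteq> E" unfolding F_def by (rule finite_level_sample level_sample_subset_E)+
  have G: "finite G" "G \<subseteq> E" unfolding G_def using level_graph_subset_E finite_subset_E by blast+
  have core: "core_edges ep c V F \<subseteq> G"
    unfolding F_def G_def by (rule core_edges_subset_level_graph)
  have inside: "snd (ep e) \<in> part F (fst (ep e))" if "e \<in> G" for e
  proof -
    have "fst (ep e) \<in> V" using that G(2) edge_ends by blast
    moreover have "boundary ep G (part F (fst (ep e))) = {}"
      using assms(1) calculation unfolding active_parts_def F_def G_def by blast
    ultimately show ?thesis using that self_in_part unfolding boundary_def by blast
  qed
  have "components ep V G = part F ` V"
    by (rule components_eq_parts[OF F core G(2) inside])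
  moreover have "ecc G (part F v)" if "v \<in> V" for v
    by (rule part_edge_connected_superset[OF F core G(1) that])
  ultimately show ?thesis using components_core_edges[OF F] by auto
qed

lemma levels_succeed_if_inactive:
  assumes "level_active r l = {}"
  shows "levels_succeed ep V m c \<delta> s l r"
  unfolding levels_succeed_def
proof (intro allI impI)
  fix Gs Hs assume "level_run ep V m c \<delta> s l r Gs Hs"
  then have Gs: "Gs l = level_graph r (Suc l)" and Hs: "Hs l = core_edges ep c V (level_sample r l)"
    using level_run_eq[of l r Gs Hs l] by simp_all
  show "(\<forall>C \<in> components ep V (Gs l). ecc (Gs l) C) \<and>
      components ep V (Gs l) = components ep V (Hs l)"
    unfolding Gs Hs by (rule components_level_graph_if_inactive[OF assms])
qed

lemma level_active_progress:
  "3 * card (level_active r (Suc i)) \<le> 2 * card (level_active r i)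
     + 2 * card {P \<in> level_active r i.
                 card (boundary ep (level_graph r (Suc i)) P \<inter> r (Suc i) ` {1..s}) < 4 * c}"
proof (rule card_active_parts_next_le)
  show "core_edges ep c V (level_sample r i) \<subseteq> level_sample r (Suc i)"
    using core_edges_subset_level_graph[of r i] sampled_Suc[of r s i]
    unfolding core_edges_def by auto
  show "level_graph r (Suc i) \<inter> r (Suc i) ` {1..s} \<subseteq> level_sample r (Suc i)"
    using sampled_Suc[of r s i] by auto
qed (rule finite_level_sample level_sample_subset_E level_graph_subset_E
    level_graph_Suc_subset Int_lower2)+

end

section \<open>Pairwise independent samples\<close>

lemma card_le_card_image_add_collisions:
  fixes f :: "'a \<Rightarrow> 'b"
  assumes "finite J"
  shows "card J \<le> card (f ` J) + card {(j, k) \<in> J \<times> J. j \<noteq> k \<and> f j = f k}"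
  using assms
proof (induction J rule: finite_induct)
  case (insert x J)
  let ?pairs = "\<lambda>J. {(j, k) \<in> J \<times> J. j \<noteq> k \<and> f j = f k}"
  have fin: "finite (?pairs (insert x J))"
    by (rule finite_subset[of _ "insert x J \<times> insert x J"]) (use insert(1) in auto)
  have mono: "?pairs J \<subseteq> ?pairs (insert x J)" by blast
  show ?case
  proof (cases "f x \<in> f ` J")
    case True
    then obtain y where y: "y \<in> J" "f y = f x" by force
    then have sub: "insert (x, y) (?pairs J) \<subseteq> ?pairs (insert x J)" and "(x, y) \<notin> ?pairs J"
      using mono insert(2) by auto
    then have "card (insert (x, y) (?pairs J)) = card (?pairs J) + 1"
      using finite_subset[OF mono fin] by simp
    then have "card (?pairs J) + 1 \<le> card (?pairs (insert x J))"
      using card_mono[OF fin sub] by simp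
    then show ?thesis using insert True by (simp add: insert_absorb)
  next
    case False
    then show ?thesis using insert card_mono[OF fin mono] by simp
  qed
qed simp

lemma integrable_measure_pmf_bounded:
  fixes g :: "'a \<Rightarrow> real"
  shows "(\<And>x. \<bar>g x\<bar> \<le> C) \<Longrightarrow> integrable (measure_pmf D) g"
  by (rule measure_pmf.integrable_const_bound[of _ C]) auto

lemma expectation_card_filter:
  fixes D :: "'a pmf"
  assumes "finite I"
  shows "measure_pmf.expectation D (\<lambda>x. real (card {i \<in> I. P i x}))
    = (\<Sum>i\<in>I. measure_pmf.prob D {x. P i x})"
proof -
  have "real (card {i \<in> I. P i x}) = (\<Sum>i\<in>I. indicator {x. P i x} x)" for x
    using sum.inter_filter[OF assms, of "\<lambda>_. 1 :: real" "\<lambda>i. P i x"] by (simp add: indicator_def of_bool_def)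
  then show ?thesis
    by (simp add: Bochner_Integration.integral_sum integrable_measure_pmf_bounded[of _ 1])
qed

definition hits :: "nat \<Rightarrow> nat set \<Rightarrow> (nat \<Rightarrow> nat) \<Rightarrow> nat" where
  "hits s B f = card {j \<in> {1..s}. f j \<in> B}"

definition collisions :: "nat \<Rightarrow> nat set \<Rightarrow> (nat \<Rightarrow> nat) \<Rightarrow> nat" where
  "collisions s B f = card {(j, k) \<in> {1..s} \<times> {1..s}. j \<noteq> k \<and> f j = f k \<and> f j \<in> B}"

lemma hits_le: "hits s B f \<le> s"
proof -
  have "hits s B f \<le> card {1..s}" unfolding hits_def by (intro card_mono) auto
  then show ?thesis by simp
qed

lemma collisions_le: "collisions s B f \<le> s * s"
proof -
  have "collisions s B f \<le> card ({1..s} \<times> {1..s})" unfolding collisions_def by (intro card_mono) auto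
  then show ?thesis by (simp add: card_cartesian_product)
qed

lemma hits_le_card_image_add_collisions:
  "hits s B f \<le> card (B \<inter> f ` {1..s}) + collisions s B f"
proof -
  let ?J = "{j \<in> {1..s}. f j \<in> B}"
  have "B \<inter> f ` {1..s} = f ` ?J" by blast
  moreover have "{(j, k) \<in> ?J \<times> ?J. j \<noteq> k \<and> f j = f k}
      = {(j, k) \<in> {1..s} \<times> {1..s}. j \<noteq> k \<and> f j = f k \<and> f j \<in> B}" by auto
  ultimately show ?thesis
    unfolding hits_def collisions_def using card_le_card_image_add_collisions[of ?J f] by simp
qed

lemma hits_sq: "hits s B f ^ 2 = card {(j, k) \<in> {1..s} \<times> {1..s}. f j \<in> B \<and> f k \<in> B}"
proof -
  have "{(j, k) \<in> {1..s} \<times> {1..s}. f j \<in> B \<and> f k \<in> B}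
      = {j \<in> {1..s}. f j \<in> B} \<times> {j \<in> {1..s}. f j \<in> B}" by auto
  then show ?thesis unfolding hits_def by (simp add: power2_eq_square card_cartesian_product)
qed

context
  fixes D :: "(nat \<Rightarrow> nat) pmf" and s m :: nat and B :: "nat set"
  assumes indep: "pairwise_indep_uniform D s m" and B: "B \<subseteq> {1..m}"
begin

private abbreviation "prob \<equiv> measure_pmf.prob D"
private abbreviation "expect \<equiv> measure_pmf.expectation D"

lemma prob_sample_eq: "j \<in> {1..s} \<Longrightarrow> a \<in> B \<Longrightarrow> prob {f. f j = a} = 1 / m"
  using indep B unfolding pairwise_indep_uniform_def by blast

lemma prob_sample_pair_eq:
  "j \<in> {1..s} \<Longrightarrow> k \<in> {1..s} \<Longrightarrow> j \<noteq> k \<Longrightarrow> a \<in> B \<Longrightarrow> b \<in> B \<Longrightarrow>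
    prob {f. f j = a \<and> f k = b} = 1 / (real m)^2"
  using indep B unfolding pairwise_indep_uniform_def by blast

lemma prob_sample_in:
  assumes "j \<in> {1..s}"
  shows "prob {f. f j \<in> B} = card B / m"
proof -
  have "prob {f. f j \<in> B} = prob (\<Union>a\<in>B. {f. f j = a})" by (rule arg_cong[where f = prob]) blast
  also have "\<dots> = (\<Sum>a\<in>B. prob {f. f j = a})"
    using finite_subset[OF B] by (intro measure_pmf.finite_measure_finite_Union) (auto simp: disjoint_family_on_def)
  also have "\<dots> = (\<Sum>a\<in>B. 1 / m)"
    using assms by (intro sum.cong) (auto simp: prob_sample_eq prob_sample_pair_eq)
  finally show ?thesis by simp
qed

lemma prob_sample_pair_in:
  assumes "j \<in> {1..s}" "k \<in> {1..s}" "j \<noteq> k"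
  shows "prob {f. f j \<in> B \<and> f k \<in> B} = (card B / m)^2"
proof -
  have "prob {f. f j \<in> B \<and> f k \<in> B} = prob (\<Union>ab\<in>B \<times> B. {f. f j = fst ab \<and> f k = snd ab})"
    by (rule arg_cong[where f = prob]) auto
  also have "\<dots> = (\<Sum>ab\<in>B \<times> B. prob {f. f j = fst ab \<and> f k = snd ab})"
    using finite_subset[OF B]
    by (intro measure_pmf.finite_measure_finite_Union) (auto simp: disjoint_family_on_def)
  also have "\<dots> = (\<Sum>ab\<in>B \<times> B. 1 / (real m)^2)"
    using assms by (intro sum.cong) (auto simp: prob_sample_eq prob_sample_pair_eq)
  also have "\<dots> = real (card B) ^ 2 / (real m)^2"
    by (simp add: card_cartesian_product power2_eq_square)
  finally show ?thesis by (simp add: power_divide)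
qed

lemma prob_sample_collision_in:
  assumes "j \<in> {1..s}" "k \<in> {1..s}" "j \<noteq> k"
  shows "prob {f. f j = f k \<and> f j \<in> B} = card B / (real m)^2"
proof -
  have "prob {f. f j = f k \<and> f j \<in> B} = prob (\<Union>a\<in>B. {f. f j = a \<and> f k = a})"
    by (rule arg_cong[where f = prob]) auto
  also have "\<dots> = (\<Sum>a\<in>B. prob {f. f j = a \<and> f k = a})"
    using finite_subset[OF B]
    by (intro measure_pmf.finite_measure_finite_Union) (auto simp: disjoint_family_on_def)
  also have "\<dots> = (\<Sum>a\<in>B. 1 / (real m)^2)"
    using assms by (intro sum.cong) (auto simp: prob_sample_eq prob_sample_pair_eq)
  finally show ?thesis by simp
qed

lemma expectation_hits: "expect (\<lambda>f. real (hits s B f)) = s * (card B / m)"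
  unfolding hits_def expectation_card_filter[OF finite_atLeastAtMost] by (simp add: prob_sample_in)

lemma expectation_hits_sq:
  "expect (\<lambda>f. real (hits s B f) ^ 2) = s * (card B / m) + s * (real s - 1) * (card B / m)^2"
proof -
  let ?q = "card B / m"
  have "{(j, k) \<in> {1..s} \<times> {1..s}. f j \<in> B \<and> f k \<in> B}
      = {x \<in> {1..s} \<times> {1..s}. f (fst x) \<in> B \<and> f (snd x) \<in> B}" for f :: "nat \<Rightarrow> nat"
    by auto
  then have "expect (\<lambda>f. real (hits s B f) ^ 2)
      = (\<Sum>x\<in>{1..s} \<times> {1..s}. prob {f. f (fst x) \<in> B \<and> f (snd x) \<in> B})"
    unfolding of_nat_power[symmetric] hits_sq by (simp add: expectation_card_filter)
  also have "\<dots> = (\<Sum>j\<in>{1..s}. \<Sum>k\<in>{1..s}. ?q^2 + (if k = j then ?q - ?q^2 else 0))"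
    unfolding sum.cartesian_product'
    by (intro sum.cong refl) (auto simp: prob_sample_in prob_sample_pair_in)
  also have "\<dots> = s * ?q + s * (real s - 1) * ?q^2"
    by (simp add: sum.distrib algebra_simps)
  finally show ?thesis .
qed

lemma expectation_collisions:
  "expect (\<lambda>f. real (collisions s B f)) = s * (real s - 1) * (card B / (real m)^2)"
proof -
  let ?r = "card B / (real m)^2"
  have "{(j, k) \<in> {1..s} \<times> {1..s}. j \<noteq> k \<and> f j = f k \<and> f j \<in> B}
      = {x \<in> {1..s} \<times> {1..s}. fst x \<noteq> snd x \<and> f (fst x) = f (snd x) \<and> f (fst x) \<in> B}"
    for f :: "nat \<Rightarrow> nat"
    by auto
  then have "expect (\<lambda>f. real (collisions s B f))
      = (\<Sum>x\<in>{1..s} \<times> {1..s}. prob {f. fst x \<noteq> snd x \<and> f (fst x) = f (snd x) \<and> f (fst x) \<in> B})"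
    unfolding collisions_def by (simp add: expectation_card_filter)
  also have "\<dots> = (\<Sum>j\<in>{1..s}. \<Sum>k\<in>{1..s}. ?r - (if k = j then ?r else 0))"
    unfolding sum.cartesian_product'
    by (intro sum.cong refl) (auto simp: prob_sample_collision_in)
  also have "\<dots> = s * (real s - 1) * ?r"
    by (simp add: sum_subtractf algebra_simps add_divide_distrib[symmetric])
  finally show ?thesis .
qed

lemma integrable_hits:
  "integrable D (\<lambda>f. real (hits s B f))" "integrable D (\<lambda>f. real (hits s B f) ^ 2)"
  by (rule integrable_measure_pmf_bounded[of _ s], simp add: hits_le,
      rule integrable_measure_pmf_bounded[of _ "s^2"], simp add: hits_le power_mono)

lemma integrable_collisions: "integrable D (\<lambda>f. real (collisions s B f))"
  by (rule integrable_measure_pmf_bounded[of _ "real (s * s)"]) (simp del: of_nat_mult add: collisions_le)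

text \<open>Chebyshev: pairwise independence already gives variance at most the mean.\<close>
lemma prob_hits_lt_half_le:
  assumes "\<mu> = s * (card B / m)" "\<mu> > 0"
  shows "prob {f. hits s B f < \<mu> / 2} \<le> 4 / \<mu>"
proof -
  let ?h = "\<lambda>f. real (hits s B f)"
  have "measure_pmf.variance D ?h = expect (\<lambda>f. ?h f ^ 2) - (expect ?h)^2"
    by (rule measure_pmf.variance_eq[OF integrable_hits])
  also have "\<dots> = \<mu> - s * (card B / m)^2"
    unfolding expectation_hits expectation_hits_sq assms(1)
    by (simp add: power2_eq_square algebra_simps add_divide_distrib[symmetric])
  finally have var: "measure_pmf.variance D ?h \<le> \<mu>" by simp
  have "expect ?h = \<mu>" unfolding expectation_hits assms(1) ..
  then have "prob {f. ?h f < \<mu> / 2} \<le> prob {f \<in> space D. \<mu> / 2 \<le> \<bar>?h f - expect ?h\<bar>}"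
    by (intro measure_pmf.finite_measure_mono) auto
  also have "\<dots> \<le> measure_pmf.variance D ?h / (\<mu> / 2)^2"
    using integrable_hits(2) assms(2) by (intro measure_pmf.Chebyshev_inequality) simp_all
  also have "\<dots> \<le> \<mu> / (\<mu> / 2)^2"
    using var by (simp add: divide_right_mono)
  also have "\<dots> = 4 / \<mu>"
    using assms(2) by (simp add: power2_eq_square field_simps)
  finally show ?thesis by simp
qed

lemma prob_collisions_ge_quarter_le:
  assumes "\<mu> = s * (card B / m)" "\<mu> > 0"
  shows "prob {f. \<mu> / 4 \<le> collisions s B f} \<le> 4 * (real s - 1) / m"
proof -
  let ?coll = "\<lambda>f. real (collisions s B f)"
  have "m > 0" using assms by (cases m) auto
  then have "expect ?coll = \<mu> / 4 * (4 * (real s - 1) / m)"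
    unfolding expectation_collisions assms(1) by (simp add: field_simps power2_eq_square)
  then have ratio: "expect ?coll / (\<mu> / 4) = 4 * (real s - 1) / m" using assms(2) by simp
  have "prob {f. \<mu> / 4 \<le> ?coll f} = prob {f \<in> space D. \<mu> / 4 \<le> ?coll f}" by simp
  also have "\<dots> \<le> expect ?coll / (\<mu> / 4)"
    using integrable_collisions assms(2) by (intro integral_Markov_inequality_measure) simp_all
  finally show ?thesis unfolding ratio .
qed

text \<open>A set of at least \<delta> \<ge> 32 c / p edges is hit by at least 4 c distinct samples unless
  there are few hits (Chebyshev) or many collisions (Markov).\<close>
lemma prob_few_distinct_samples_le:
  fixes c \<delta> :: nat and p :: real
  assumes "\<delta> \<le> card B" "s = nat \<lceil>p * m\<rceil>" "0 < p" "100 * p \<le> 1"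
    and "32 * real c \<le> p * \<delta>" "1 \<le> c"
  shows "prob {f. card (B \<inter> f ` {1..s}) < 4 * c} \<le> 1/6"
proof -
  define \<mu> where "\<mu> = s * (card B / m)"
  have "card B \<le> m" using card_mono[OF _ B] by simp
  have "100 * (p * \<delta>) \<le> \<delta>" using assms(4) mult_right_mono[of "100 * p" 1 "real \<delta>"] by simp
  then have "card B \<ge> 1" using assms(1,5,6) by linarith
  then have m: "real m > 0" using \<open>card B \<le> m\<close> by simp
  have "real s = of_int \<lceil>p * m\<rceil>" using assms(2,3) by simp
  then have s: "p * m \<le> s" "s < p * m + 1" using ceiling_correct[of "p * m"] by linarith+
  have "p * card B \<le> \<mu>"
    using s(1) m \<open>card B \<ge> 1\<close> unfolding \<mu>_def by (simp add: field_simps mult_right_mono)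
  moreover have "p * \<delta> \<le> p * card B" using assms(1,3) by simp
  ultimately have \<mu>: "32 * real c \<le> \<mu>" using assms(5) by linarith
  then have "\<mu> > 0" using assms(6) by linarith
  have "32 \<le> \<mu>" using \<mu> assms(6) by linarith
  then have "4 / \<mu> \<le> 1/8" by (simp add: field_simps)
  then have few_hits: "prob {f. hits s B f < \<mu> / 2} \<le> 1/8"
    using prob_hits_lt_half_le[OF \<mu>_def \<open>\<mu> > 0\<close>] by linarith
  have many_collisions: "prob {f. \<mu> / 4 \<le> collisions s B f} \<le> 1/25"
  proof -
    have "4 * (real s - 1) / m \<le> 4 * p" using s(2) m by (simp add: field_simps)
    then show ?thesis using prob_collisions_ge_quarter_le[OF \<mu>_def \<open>\<mu> > 0\<close>] assms(4) by linarith
  qed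
  have "{f. card (B \<inter> f ` {1..s}) < 4 * c}
      \<subseteq> {f. hits s B f < \<mu> / 2} \<union> {f. \<mu> / 4 \<le> collisions s B f}"
  proof
    fix f assume "f \<in> {f. card (B \<inter> f ` {1..s}) < 4 * c}"
    moreover have "real (hits s B f) \<le> card (B \<inter> f ` {1..s}) + real (collisions s B f)"
      using hits_le_card_image_add_collisions[of s B f] by linarith
    ultimately show "f \<in> {f. hits s B f < \<mu> / 2} \<union> {f. \<mu> / 4 \<le> collisions s B f}"
      using \<mu> by auto
  qed
  then have "prob {f. card (B \<inter> f ` {1..s}) < 4 * c}
      \<le> prob ({f. hits s B f < \<mu> / 2} \<union> {f. \<mu> / 4 \<le> collisions s B f})"
    by (rule measure_pmf.finite_measure_mono) simp
  also have "\<dots> \<le> prob {f. hits s B f < \<mu> / 2} + prob {f. \<mu> / 4 \<le> collisions s B f}"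
    by (rule measure_Un_le) simp_all
  finally show ?thesis using few_hits many_collisions by simp
qed

end

section \<open>The number of active parts decays geometrically\<close>

lemma Pi_pmf_atLeastAtMost_Suc:
  "Pi_pmf {1..Suc j} d D =
    bind_pmf (Pi_pmf {1..j} d D) (\<lambda>r. bind_pmf (D (Suc j)) (\<lambda>y. return_pmf (r(Suc j := y))))"
proof -
  have "{1..Suc j} = insert (Suc j) {1..j}" by auto
  then show ?thesis by (simp only:) (subst Pi_pmf_insert'; auto intro: bind_commute_pmf)
qed

context sampling_levels
begin

lemma expectation_level_active_Suc_le:
  fixes p :: real and D :: "(nat \<Rightarrow> nat) pmf"
  assumes "pairwise_indep_uniform D s m" "s = nat \<lceil>p * m\<rceil>" "0 < p" "100 * p \<le> 1"
    and "32 * real c \<le> p * \<delta>"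
  shows "measure_pmf.expectation D (\<lambda>y. real (card (level_active (r(Suc i := y)) (Suc i))))
    \<le> 7/9 * card (level_active r i)"
proof -
  let ?A = "level_active r i" and ?T = "level_graph r (Suc i)"
  let ?poor = "\<lambda>y. card {P \<in> ?A. card (boundary ep ?T P \<inter> y ` {1..s}) < 4 * c}"
  have progress: "real (card (level_active (r(Suc i := y)) (Suc i))) \<le> 2/3 * card ?A + 2/3 * ?poor y"
    for y
  proof -
    have "level_active (r(Suc i := y)) i = ?A" by (rule level_active_upd)
    moreover have "level_graph (r(Suc i := y)) (Suc i) = ?T" by (rule level_graph_upd) simp
    ultimately show ?thesis
      using level_active_progress[of "r(Suc i := y)" i] by (simp only: fun_upd_same)
  qed
  have "measure_pmf.expectation D (\<lambda>y. real (?poor y))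
      = (\<Sum>P\<in>?A. measure_pmf.prob D {y. card (boundary ep ?T P \<inter> y ` {1..s}) < 4 * c})"
    by (rule expectation_card_filter[OF finite_active_parts])
  also have "\<dots> \<le> (\<Sum>P\<in>?A. 1/6)"
  proof (rule sum_mono)
    fix P assume "P \<in> ?A"
    moreover have "boundary ep ?T P \<subseteq> {1..m}"
      using level_graph_subset_E unfolding boundary_def by blast
    ultimately show "measure_pmf.prob D {y. card (boundary ep ?T P \<inter> y ` {1..s}) < 4 * c} \<le> 1/6"
      using prob_few_distinct_samples_le[OF assms(1) _ boundary_level_active assms(2-5) c_pos] by blast
  qed
  finally have poor: "measure_pmf.expectation D (\<lambda>y. real (?poor y)) \<le> card ?A / 6" by simp
  have "measure_pmf.expectation D (\<lambda>y. real (card (level_active (r(Suc i := y)) (Suc i))))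
      \<le> measure_pmf.expectation D (\<lambda>y. 2/3 * card ?A + 2/3 * ?poor y)"
    using progress card_active_parts_le
    by (intro integral_mono integrable_measure_pmf_bounded[of _ "card V"]
        integrable_measure_pmf_bounded[of _ "2/3 * card ?A + 2/3 * card ?A"])
       (auto intro: card_mono finite_active_parts)
  also have "\<dots> = 2/3 * card ?A + 2/3 * measure_pmf.expectation D (\<lambda>y. real (?poor y))"
    using integrable_measure_pmf_bounded[of "\<lambda>y. real (?poor y)" "card ?A"]
    by (simp add: card_mono finite_active_parts)
  also have "\<dots> \<le> 7/9 * card ?A" using poor by simp
  finally show ?thesis .
qed

lemma nn_integral_level_active_le:
  fixes p :: real and D :: "nat \<Rightarrow> (nat \<Rightarrow> nat) pmf"
  assumes "\<forall>i\<in>{1..l}. pairwise_indep_uniform (D i) s m" "s = nat \<lceil>p * m\<rceil>" "0 < p"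
    and "100 * p \<le> 1" "32 * real c \<le> p * \<delta>" "j \<le> l"
  shows "(\<integral>\<^sup>+r. ennreal (real (card (level_active r j))) \<partial>Pi_pmf {1..j} (\<lambda>_. 0) D) \<le> ennreal ((7/9)^j * real (card V))"
  using assms(6)
proof (induction j)
  case 0
  have "(\<integral>\<^sup>+r. ennreal (real (card (level_active r 0))) \<partial>Pi_pmf {1..0} (\<lambda>_. 0) D)
      \<le> (\<integral>\<^sup>+r. ennreal (real (card V)) \<partial>Pi_pmf {1..0} (\<lambda>_. 0) D)"
    by (intro nn_integral_mono) (simp add: card_active_parts_le)
  then show ?case by simp
next
  case (Suc j)
  let ?P = "Pi_pmf {1..j} (\<lambda>_. 0) D"
  have "(\<integral>\<^sup>+r. ennreal (real (card (level_active r (Suc j)))) \<partial>Pi_pmf {1..Suc j} (\<lambda>_. 0) D)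
      = (\<integral>\<^sup>+r. \<integral>\<^sup>+y. ennreal (real (card (level_active (r(Suc j := y)) (Suc j)))) \<partial>D (Suc j) \<partial>?P)"
    unfolding Pi_pmf_atLeastAtMost_Suc by simp
  also have "\<dots> \<le> (\<integral>\<^sup>+r. ennreal (7/9) * ennreal (real (card (level_active r j))) \<partial>?P)"
  proof (rule nn_integral_mono)
    fix r
    have "(\<integral>\<^sup>+y. ennreal (real (card (level_active (r(Suc j := y)) (Suc j)))) \<partial>D (Suc j))
        = measure_pmf.expectation (D (Suc j)) (\<lambda>y. real (card (level_active (r(Suc j := y)) (Suc j))))"
      using card_active_parts_le
      by (intro nn_integral_eq_integral integrable_measure_pmf_bounded[of _ "card V"]) auto
    also have "\<dots> \<le> ennreal (7/9 * real (card (level_active r j)))"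
      using assms(1-5) Suc.prems by (intro ennreal_leI expectation_level_active_Suc_le) auto
    also have "\<dots> = ennreal (7/9) * ennreal (real (card (level_active r j)))"
      by (rule ennreal_mult) simp_all
    finally show "(\<integral>\<^sup>+y. ennreal (real (card (level_active (r(Suc j := y)) (Suc j)))) \<partial>D (Suc j))
        \<le> ennreal (7/9) * ennreal (real (card (level_active r j)))" .
  qed
  also have "\<dots> = ennreal (7/9) * (\<integral>\<^sup>+r. ennreal (real (card (level_active r j))) \<partial>?P)"
    by (rule nn_integral_cmult) simp
  also have "\<dots> \<le> ennreal (7/9) * ennreal ((7/9)^j * real (card V))"
    using Suc by (intro mult_left_mono) simp_all
  also have "\<dots> = ennreal ((7/9)^Suc j * real (card V))"
    by (simp add: ennreal_mult[symmetric] mult.assoc)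
  finally show ?case .
qed

lemma prob_level_active_nonempty_le:
  fixes p :: real and D :: "nat \<Rightarrow> (nat \<Rightarrow> nat) pmf"
  assumes "\<forall>i\<in>{1..l}. pairwise_indep_uniform (D i) s m" "s = nat \<lceil>p * m\<rceil>" "0 < p"
    and "100 * p \<le> 1" "32 * real c \<le> p * \<delta>"
  shows "measure_pmf.prob (Pi_pmf {1..l} (\<lambda>_. 0) D) {r. level_active r l \<noteq> {}} \<le> (7/9)^l * real (card V)"
proof -
  let ?M = "Pi_pmf {1..l} (\<lambda>_. 0) D"
  have "emeasure ?M {r. level_active r l \<noteq> {}} = (\<integral>\<^sup>+r. indicator {r. level_active r l \<noteq> {}} r \<partial>?M)"
    by simp
  also have "\<dots> \<le> (\<integral>\<^sup>+r. ennreal (real (card (level_active r l))) \<partial>?M)"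
    using finite_active_parts
    by (intro nn_integral_mono) (auto simp: indicator_def Suc_le_eq card_gt_0_iff)
  also have "\<dots> \<le> ennreal ((7/9)^l * real (card V))"
    by (rule nn_integral_level_active_le[OF assms]) simp
  finally show ?thesis by (simp add: measure_pmf.emeasure_eq_measure)
qed

lemma prob_levels_succeed_ge:
  fixes p :: real and D :: "nat \<Rightarrow> (nat \<Rightarrow> nat) pmf"
  assumes "\<forall>i\<in>{1..l}. pairwise_indep_uniform (D i) s m" "s = nat \<lceil>p * m\<rceil>" "0 < p"
    and "100 * p \<le> 1" "32 * real c \<le> p * \<delta>"
  defines "M \<equiv> Pi_pmf {1..l} (\<lambda>_. 0) D"
  shows "1 - (7/9)^l * real (card V) \<le> measure_pmf.prob M {r. levels_succeed ep V m c \<delta> s l r}"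
proof -
  have "measure_pmf.prob M {r. level_active r l = {}} \<le> measure_pmf.prob M {r. levels_succeed ep V m c \<delta> s l r}"
    using levels_succeed_if_inactive by (intro measure_pmf.finite_measure_mono) auto
  moreover have "measure_pmf.prob M {r. level_active r l = {}}
      = 1 - measure_pmf.prob M {r. level_active r l \<noteq> {}}"
    using measure_pmf.prob_compl[of "{r. level_active r l \<noteq> {}}" M]
    by (simp add: Compl_eq_Diff_UNIV[symmetric] Collect_neg_eq[symmetric])
  ultimately show ?thesis using prob_level_active_nonempty_le[OF assms(1-5)] unfolding M_def by linarith
qed

end

text \<open>After (\<gamma> + 1) log n / log (9/7) rounds the expected number of active parts, at most
  (7/9)^l n, is below n^-\<gamma>; the 100 extra rounds turn p l < 1 into p \<le> 1/100.\<close>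
definition rounds :: "real \<Rightarrow> nat \<Rightarrow> nat" where
  "rounds \<gamma> n = 100 + nat \<lceil>(\<gamma> + 1) * ln n / ln (9/7)\<rceil>"

lemma rounds_le_ln:
  assumes "\<gamma> > 0" "n \<ge> 2"
  shows "real (rounds \<gamma> n) \<le> (101 / ln 2 + (\<gamma> + 1) / ln (9/7)) * ln n"
proof -
  have "ln 2 \<le> ln n" using assms(2) by simp
  have "0 \<le> (\<gamma> + 1) * ln n / ln (9/7)" using assms by simp
  then have "real (rounds \<gamma> n) \<le> 101 + (\<gamma> + 1) * ln n / ln (9/7)"
    unfolding rounds_def by linarith
  moreover have "101 \<le> 101 / ln 2 * ln n" using \<open>ln 2 \<le> ln n\<close> by (simp add: field_simps)
  ultimately show ?thesis by (simp add: algebra_simps)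
qed

lemma seven_ninths_pow_rounds_le:
  assumes "n \<ge> 1"
  shows "(7/9) ^ rounds \<gamma> n * real n \<le> real n powr (-\<gamma>)"
proof -
  have "(\<gamma> + 1) * ln n / ln (9/7) \<le> rounds \<gamma> n" unfolding rounds_def by linarith
  then have "(\<gamma> + 1) * ln n \<le> rounds \<gamma> n * ln (9/7)" by (simp add: pos_divide_le_eq)
  then have "real n powr (\<gamma> + 1) \<le> (9/7) ^ rounds \<gamma> n"
    using assms by (simp add: powr_def powr_realpow[symmetric])
  then have "real n / (9/7) ^ rounds \<gamma> n \<le> real n / real n powr (\<gamma> + 1)"
    using assms by (intro divide_left_mono) auto
  also have "\<dots> = real n powr 1 / real n powr (\<gamma> + 1)" using assms by simp
  also have "\<dots> = real n powr (1 - (\<gamma> + 1))" by (rule powr_diff[symmetric])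
  also have "\<dots> = real n powr (-\<gamma>)" by simp
  finally show ?thesis by (simp add: power_divide mult.commute)
qed

lemma prob_levels_succeed_ge_powr:
  fixes V :: "nat set" and ep :: "nat \<Rightarrow> nat \<times> nat" and m c \<delta> :: nat
    and p \<gamma> :: real and D :: "nat \<Rightarrow> (nat \<Rightarrow> nat) pmf"
  defines "l \<equiv> rounds \<gamma> (card V)" and "s \<equiv> nat \<lceil>p * m\<rceil>"
  assumes "finite V" "V \<noteq> {}" "\<forall>e\<in>{1..m}. fst (ep e) \<in> V \<and> snd (ep e) \<in> V"
    and "1 \<le> c" "0 < p" "\<forall>i\<in>{1..l}. pairwise_indep_uniform (D i) s m"
    and "p * l < 1" "32 * real c \<le> p * \<delta>"
  shows "1 - real (card V) powr (-\<gamma>)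
    \<le> measure_pmf.prob (Pi_pmf {1..l} (\<lambda>_. 0) D) {r. levels_succeed ep V m c \<delta> s l r}"
proof -
  interpret sampling_levels ep V m c \<delta> s
    using assms(3-6) by unfold_locales auto
  have "100 * p \<le> p * l" using assms(7) unfolding l_def rounds_def by simp
  then have "100 * p \<le> 1" using assms(9) by linarith
  note succeed = prob_levels_succeed_ge[OF assms(8) meta_eq_to_obj_eq[OF s_def] assms(7) this assms(10)]
  have "card V \<ge> 1" using assms(3,4) by (simp add: Suc_le_eq card_gt_0_iff)
  then show ?thesis using succeed seven_ninths_pow_rounds_le[of "card V" \<gamma>] unfolding l_def by linarith
qed

theorem lemma4:
  fixes \<gamma> :: real
  assumes "\<gamma> > 0"
  shows "\<exists>K Cst :: real. \<exists>lf :: nat \<Rightarrow> nat.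
    (\<forall>n. 1 \<le> lf n) \<and> (\<forall>n\<ge>2. real (lf n) \<le> K * ln (real n)) \<and>
    (\<forall>(V :: nat set) (ep :: nat \<Rightarrow> nat \<times> nat) (m :: nat) (c :: nat) (\<delta> :: nat) (p :: real)
       (D :: nat \<Rightarrow> (nat \<Rightarrow> nat) pmf).
       let n = card V; l = lf n; s = nat \<lceil>p * real m\<rceil> in
       finite V \<longrightarrow> V \<noteq> {} \<longrightarrow>
       (\<forall>e\<in>{1..m}. fst (ep e) \<in> V \<and> snd (ep e) \<in> V \<and> fst (ep e) \<noteq> snd (ep e)) \<longrightarrow>
       1 \<le> c \<longrightarrow> c < \<delta> \<longrightarrow> 0 < p \<longrightarrow> p < 1 \<longrightarrow>
       (\<forall>i\<in>{1..l}. pairwise_indep_uniform (D i) s m) \<longrightarrow>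
       p * real l < 1 \<longrightarrow> 32 * real c \<le> p * real \<delta> \<longrightarrow>
       measure_pmf.prob (Pi_pmf {1..l} (\<lambda>_. 0) D)
         {r. \<forall>Gs Hs. level_run ep V m c \<delta> s l r Gs Hs \<longrightarrow>
               (\<forall>C \<in> components ep V (Gs l). edge_connected ep c C (induced ep (Gs l) C)) \<and>
               components ep V (Gs l) = components ep V (Hs l)}
         \<ge> 1 - Cst * real n powr (- \<gamma>))"
proof (rule exI[of _ "101 / ln 2 + (\<gamma> + 1) / ln (9/7)"], rule exI[of _ 1],
    rule exI[of _ "rounds \<gamma>"], intro conjI allI impI, goal_cases)
  case (1 n)
  then show ?case by (simp add: rounds_def)
next
  case (2 n)
  then show ?case by (rule rounds_le_ln[OF assms])
next
  case (3 V ep m c \<delta> p D)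
  show ?case
    unfolding Let_def
    using prob_levels_succeed_ge_powr[of V m ep c p \<gamma> D \<delta>] by (simp add: levels_succeed_def)
qed

end
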